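(* Let $g_n$, $n\in\mathbb N$, be wasteful partial functions from $X^M$ to a set $Y$. Then there exist a set $A\subseteq X^M$ of width $1$, injective partial functions $g_n'\subseteq g_n$ ($n\in\mathbb N$) such that $A$ is the disjoint union of the sets $\operatorname{dom}(g_n')$, and partial functions $h_n$ from $X^M$ to $A$, such that $g_n=g_n'\circ h_n$ for all $n\in\mathbb N$.
   Context: $X=\omega\times\omega$, elements $(a|b)$ ($x$-coordinate $a$, $y$-coordinate $b$); $M=\{1,\dots,m\}$. Width of $Y\subseteq X$: $\sup_n|Y\cap(\omega\times\{n\})|$; the width of a set $A\subseteq X^M$ is the maximum of the widths of its projections onto the components $i\in M$. $B^M_k=\{u\in X^M:\exists i\in M\,((u_i)^y<k)\}$; a subset of $X^M$ is bounded iff contained in some $B^M_k$. A partial function $p$ from $X^M$ to $Y$ is wasteful iff $p^{-1}[d]$ is unbounded for every $d\in\operatorname{ran}(p)$. Composition of partial functions: $(g\circ h)(u)$ is defined iff $h(u)$ is defined and lies in $\operatorname{dom}(g)$. *)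

theory Defs
  imports Main "HOL-Library.FuncSet" "HOL-Library.Extended_Nat" "HOL-Library.Disjoint_Sets"
begin

text \<open>X = omega x omega; a point (a|b) is the pair (a, b), x-coordinate fst, y-coordinate snd.\<close>

type_synonym pt = "nat \<times> nat"

definition XM :: "nat \<Rightarrow> (nat \<Rightarrow> pt) set" where
  "XM m = PiE {1..m} (\<lambda>_. UNIV)"

definition row_size :: "pt set \<Rightarrow> nat \<Rightarrow> enat" where
  "row_size Y n = (let S = Y \<inter> (UNIV \<times> {n}) in if finite S then enat (card S) else \<infinity>)"

definition width :: "pt set \<Rightarrow> enat" where
  "width Y = (SUP n. row_size Y n)"

definition widthM :: "nat \<Rightarrow> (nat \<Rightarrow> pt) set \<Rightarrow> enat" where
  "widthM m A = (SUP i\<in>{1..m}. width ((\<lambda>u. u i) ` A))"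

definition BM :: "nat \<Rightarrow> nat \<Rightarrow> (nat \<Rightarrow> pt) set" where
  "BM m k = {u \<in> XM m. \<exists>i\<in>{1..m}. snd (u i) < k}"

definition boundedM :: "nat \<Rightarrow> (nat \<Rightarrow> pt) set \<Rightarrow> bool" where
  "boundedM m S \<longleftrightarrow> (\<exists>k. S \<subseteq> BM m k)"

definition wasteful :: "nat \<Rightarrow> ((nat \<Rightarrow> pt) \<Rightarrow> 'y option) \<Rightarrow> bool" where
  "wasteful m p \<longleftrightarrow> (\<forall>d\<in>ran p. \<not> boundedM m {u. p u = Some d})"

end

theory Submission
  imports Defs "HOL-Library.Countable_Set"
begin

(* Enumerate the countably many pairs (n, d) with d in the range of g n as
   e_0, e_1, ...  Wastefulness says that the fibre of g n over d contains points all of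
   whose y-coordinates are arbitrarily large, so we may choose, for each j, a point p j
   in the fibre of e_j so high that every coordinate of p (j+1) lies strictly above every
   coordinate of p j (a "staircase").  Then the map j |-> (u |-> y-coordinate of u i) is
   injective for every component i, so the set A of chosen points has width 1, and p is
   injective, so every pair (n, d) gets its own representative a n d.  Restricting g n to
   its representatives gives g' n, and h n sends u to the representative of g n u. *)

lemma width_le_1_if_inj_snd:
  assumes "inj_on snd Y"
  shows "width Y \<le> 1"
  unfolding width_def
proof (rule SUP_least)
  fix r
  let ?S = "Y \<inter> (UNIV \<times> {r})"
  have inj: "inj_on snd ?S" using assms by (rule inj_on_subset) blast
  have row: "snd ` ?S \<subseteq> {r}" by auto
  then have fin: "finite ?S" using inj_on_finite[OF inj] by blast
  have "card ?S = card (snd ` ?S)" using card_image[OF inj] by simp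
  also have "\<dots> \<le> card {r}" using card_mono[OF _ row] by simp
  finally show "row_size Y r \<le> 1"
    unfolding row_size_def Let_def using fin by (simp add: one_enat_def)
qed

lemma widthM_le_1_if_inj_rows:
  assumes "\<And>i. i \<in> {1..m} \<Longrightarrow> inj_on (\<lambda>u. snd (u i)) A"
  shows "widthM m A \<le> 1"
  unfolding widthM_def
proof (rule SUP_least)
  fix i assume "i \<in> {1..m}"
  then have "inj_on (snd \<circ> (\<lambda>u. u i)) A" using assms by (simp add: comp_def)
  then show "width ((\<lambda>u. u i) ` A) \<le> 1"
    by (intro width_le_1_if_inj_snd inj_on_imageI)
qed

definition staircase :: "'i set \<Rightarrow> (nat \<Rightarrow> 'i \<Rightarrow> 'a \<times> nat) \<Rightarrow> bool" where
  "staircase I p \<longleftrightarrow>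
     (\<forall>j j'. j < j' \<longrightarrow> (\<forall>i\<in>I. \<forall>i'\<in>I. snd (p j i) < snd (p j' i')))"

lemma staircaseI_Suc:
  assumes "I \<noteq> {}"
    and step: "\<And>j. \<forall>i\<in>I. \<forall>i'\<in>I. snd (p j i) < snd (p (Suc j) i')"
  shows "staircase I p"
  unfolding staircase_def
proof (intro allI impI)
  obtain i\<^sub>0 where i\<^sub>0: "i\<^sub>0 \<in> I" using \<open>I \<noteq> {}\<close> by blast
  fix j j' :: nat assume "j < j'"
  then show "\<forall>i\<in>I. \<forall>i'\<in>I. snd (p j i) < snd (p j' i')"
  proof (induction rule: less_Suc_induct)
    case (1 j) show ?case by (rule step)
  next
    case (2 j k l)
    show ?case
    proof (intro ballI)
      fix i i' assume "i \<in> I" "i' \<in> I"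
      then have "snd (p j i) < snd (p k i\<^sub>0)" "snd (p k i\<^sub>0) < snd (p l i')"
        using 2 i\<^sub>0 by blast+
      then show "snd (p j i) < snd (p l i')" by linarith
    qed
  qed
qed

lemma staircase_exists:
  fixes F :: "nat \<Rightarrow> ('i \<Rightarrow> 'a \<times> nat) set"
  assumes "finite I" "I \<noteq> {}"
    and high: "\<And>j k. \<exists>u\<in>F j. \<forall>i\<in>I. k \<le> snd (u i)"
  shows "\<exists>p. (\<forall>j. p j \<in> F j) \<and> staircase I p"
proof -
  have "\<exists>p. \<forall>j. p j \<in> F j \<and> (\<forall>i\<in>I. \<forall>i'\<in>I. snd (p j i) < snd (p (Suc j) i'))"
  proof (rule dependent_nat_choice)
    show "\<exists>u. u \<in> F 0" using high by blast
  next
    fix u j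
    let ?k = "Suc (Max ((\<lambda>i. snd (u i)) ` I))"
    obtain v where "v \<in> F (Suc j)" and v: "\<forall>i\<in>I. ?k \<le> snd (v i)"
      using high by blast
    moreover have "\<forall>i\<in>I. \<forall>i'\<in>I. snd (u i) < snd (v i')"
    proof (intro ballI)
      fix i i' assume "i \<in> I" "i' \<in> I"
      then have "snd (u i) \<le> Max ((\<lambda>i. snd (u i)) ` I)" using \<open>finite I\<close> by simp
      then show "snd (u i) < snd (v i')" using v \<open>i' \<in> I\<close> by fastforce
    qed
    ultimately show "\<exists>v. v \<in> F (Suc j) \<and> (\<forall>i\<in>I. \<forall>i'\<in>I. snd (u i) < snd (v i'))"
      by blast
  qed
  then show ?thesis using staircaseI_Suc[OF \<open>I \<noteq> {}\<close>] by blast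
qed

lemma staircase_inj_row:
  assumes "staircase I p" "i \<in> I"
  shows "inj (\<lambda>j. snd (p j i))"
proof (rule injI)
  fix j j' assume "snd (p j i) = snd (p j' i)"
  with assms show "j = j'" unfolding staircase_def
    by (metis less_irrefl linorder_neqE_nat)
qed

lemma staircase_inj:
  assumes "staircase I p" "i \<in> I"
  shows "inj p"
  using staircase_inj_row[OF assms] by (intro inj_on_imageI2[of "\<lambda>u. snd (u i)"]) (simp add: comp_def)

lemma staircase_widthM:
  assumes "staircase {1..m} p" "B \<subseteq> range p"
  shows "widthM m B \<le> 1"
proof (rule widthM_le_1_if_inj_rows)
  fix i assume "i \<in> {1..m}"
  then have "inj_on ((\<lambda>u. snd (u i)) \<circ> p) UNIV"
    using staircase_inj_row[OF assms(1)] by (simp add: comp_def)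
  then show "inj_on (\<lambda>u. snd (u i)) B"
    using inj_on_imageI inj_on_subset assms(2) by blast
qed

text \<open>\<open>X^M\<close> is countable (a point is determined by the list of its \<open>m\<close> coordinates);
  hence every \<open>g n\<close> has countably many values and the pairs \<open>(n, d)\<close> can be enumerated.\<close>
lemma countable_XM: "countable (XM m)"
proof (rule countableI')
  show "inj_on (\<lambda>u. map u [1..<Suc m]) (XM m)"
    unfolding XM_def by (rule inj_onI, rule PiE_ext) (auto simp: map_eq_conv)
qed

lemma unbounded_high_point:
  assumes "S \<subseteq> XM m" "\<not> boundedM m S"
  shows "\<exists>u\<in>S. \<forall>i\<in>{1..m}. k \<le> snd (u i)"
proof -
  obtain u where "u \<in> S" "u \<notin> BM m k" using assms(2) unfolding boundedM_def by blast
  then show ?thesis using assms(1) unfolding BM_def by (auto simp: not_less)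
qed

lemma wasteful_representatives:
  fixes g :: "nat \<Rightarrow> ((nat \<Rightarrow> pt) \<Rightarrow> 'y option)"
  assumes "m \<ge> 1"
    and dom: "\<And>n. dom (g n) \<subseteq> XM m"
    and wasteful: "\<And>n. wasteful m (g n)"
  defines "S \<equiv> SIGMA n:UNIV. ran (g n)"
  shows "\<exists>a. (\<forall>n. \<forall>d\<in>ran (g n). g n (a n d) = Some d)
            \<and> inj_on (case_prod a) S \<and> widthM m (case_prod a ` S) \<le> 1"
proof (cases "S = {}")
  case True
  then show ?thesis
    by (auto simp: S_def intro: widthM_le_1_if_inj_rows)
next
  case False
  have "countable (ran (g n))" for n
  proof -
    have "ran (g n) = (\<lambda>u. the (g n u)) ` dom (g n)" unfolding ran_def dom_def by force
    then show ?thesis using countable_subset[OF dom countable_XM] by simp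
  qed
  then have "countable S" unfolding S_def by blast
  define e where "e = from_nat_into S"
  have e_onto: "range e = S" unfolding e_def using False \<open>countable S\<close> by simp
  define F where "F j = {u. g (fst (e j)) u = Some (snd (e j))}" for j
  have "\<exists>u\<in>F j. \<forall>i\<in>{1..m}. k \<le> snd (u i)" for j k
  proof (rule unbounded_high_point)
    have "snd (e j) \<in> ran (g (fst (e j)))" using e_onto by (force simp: S_def)
    then show "\<not> boundedM m (F j)" using wasteful unfolding wasteful_def F_def by blast
    show "F j \<subseteq> XM m" using dom unfolding F_def by blast
  qed
  then obtain p where p_in: "\<And>j. p j \<in> F j" and stair: "staircase {1..m} p"
    using staircase_exists[of "{1..m}" F] \<open>m \<ge> 1\<close> by auto
  define a where "a n d = p (inv e (n, d))" for n d
  have a_eq: "case_prod a = p \<circ> inv e" by (simp add: a_def fun_eq_iff)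
  show ?thesis
  proof (intro exI conjI ballI allI)
    fix n d assume "d \<in> ran (g n)"
    then have "e (inv e (n, d)) = (n, d)" using e_onto by (simp add: S_def f_inv_into_f)
    then show "g n (a n d) = Some d" using p_in[of "inv e (n, d)"] by (simp add: a_def F_def)
  next
    have "inj p" using staircase_inj[OF stair, of 1] \<open>m \<ge> 1\<close> by simp
    moreover have "inj_on (inv e) S" using e_onto by (simp add: inj_on_inv_into)
    ultimately show "inj_on (case_prod a) S"
      unfolding a_eq by (simp add: comp_inj_on inj_on_subset)
  next
    show "widthM m (case_prod a ` S) \<le> 1"
      using stair by (rule staircase_widthM) (auto simp: a_eq)
  qed
qed

lemma factor_through_representatives:
  fixes g :: "'n \<Rightarrow> ('x \<Rightarrow> 'y option)" and a :: "'n \<Rightarrow> 'y \<Rightarrow> 'x"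
  assumes rep: "\<And>n d. d \<in> ran (g n) \<Longrightarrow> g n (a n d) = Some d"
    and inj: "inj_on (case_prod a) (SIGMA n:UNIV. ran (g n))"
  shows "\<exists>g' h. (\<forall>n. g' n \<subseteq>\<^sub>m g n \<and> inj_on (g' n) (dom (g' n)))
           \<and> (\<Union>n. dom (g' n)) = case_prod a ` (SIGMA n:UNIV. ran (g n))
           \<and> disjoint_family (\<lambda>n. dom (g' n))
           \<and> (\<forall>n. dom (h n) = dom (g n)
                 \<and> ran (h n) \<subseteq> case_prod a ` (SIGMA n:UNIV. ran (g n))
                 \<and> g n = g' n \<circ>\<^sub>m h n)"
proof -
  define g' where "g' n = g n |` (a n ` ran (g n))" for n
  define h where "h n = map_option (a n) \<circ> g n" for n
  have in_ran: "g n u = Some d \<Longrightarrow> d \<in> ran (g n)" for n u d by (auto simp: ran_def)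
  have dom_g': "dom (g' n) = a n ` ran (g n)" for n
  proof -
    have "a n ` ran (g n) \<subseteq> dom (g n)" using rep by (auto simp: dom_def)
    then show ?thesis by (auto simp: g'_def)
  qed
  have g'_rep: "d \<in> ran (g n) \<Longrightarrow> g' n (a n d) = Some d" for n d
    using rep unfolding g'_def by simp
  show ?thesis
  proof (intro exI conjI allI)
    fix n
    show "g' n \<subseteq>\<^sub>m g n" by (auto simp: map_le_def g'_def)
    show "inj_on (g' n) (dom (g' n))"
      by (rule inj_onI) (auto simp: dom_g' g'_rep)
    show "dom (h n) = dom (g n)" by (auto simp: h_def dom_def)
    show "ran (h n) \<subseteq> case_prod a ` (SIGMA n:UNIV. ran (g n))"
      by (auto simp: h_def ran_def intro: in_ran)
    show "g n = g' n \<circ>\<^sub>m h n"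
    proof
      fix u show "g n u = (g' n \<circ>\<^sub>m h n) u"
        by (cases "g n u") (auto simp: h_def map_comp_def g'_rep in_ran)
    qed
  next
    show "(\<Union>n. dom (g' n)) = case_prod a ` (SIGMA n:UNIV. ran (g n))"
      by (auto simp: dom_g')
    have "n = n'" if "d \<in> ran (g n)" "d' \<in> ran (g n')" "a n d = a n' d'" for n n' d d'
      using inj_onD[OF inj, of "(n, d)" "(n', d')"] that by simp
    then show "disjoint_family (\<lambda>n. dom (g' n))"
      unfolding disjoint_family_on_def dom_g' by blast
  qed
qed

theorem mainTheorem5:
  fixes m :: nat
    and g :: "nat \<Rightarrow> ((nat \<Rightarrow> pt) \<Rightarrow> 'y option)"
  assumes "m \<ge> 1"
    and "\<And>n. dom (g n) \<subseteq> XM m"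
    and "\<And>n. wasteful m (g n)"
  shows "\<exists>(A :: (nat \<Rightarrow> pt) set) (g' :: nat \<Rightarrow> ((nat \<Rightarrow> pt) \<Rightarrow> 'y option))
            (h :: nat \<Rightarrow> ((nat \<Rightarrow> pt) \<Rightarrow> (nat \<Rightarrow> pt) option)).
           A \<subseteq> XM m \<and> widthM m A \<le> 1
         \<and> (\<forall>n. g' n \<subseteq>\<^sub>m g n \<and> inj_on (g' n) (dom (g' n)))
         \<and> A = (\<Union>n. dom (g' n)) \<and> disjoint_family (\<lambda>n. dom (g' n))
         \<and> (\<forall>n. dom (h n) \<subseteq> XM m \<and> ran (h n) \<subseteq> A \<and> g n = g' n \<circ>\<^sub>m h n)"
proof -
  let ?S = "SIGMA n:UNIV. ran (g n)"
  obtain a where rep: "\<And>n d. d \<in> ran (g n) \<Longrightarrow> g n (a n d) = Some d"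
    and inj: "inj_on (case_prod a) ?S" and width: "widthM m (case_prod a ` ?S) \<le> 1"
    using wasteful_representatives[where g = g, OF assms] by auto
  obtain g' h where
      g': "\<forall>n. g' n \<subseteq>\<^sub>m g n \<and> inj_on (g' n) (dom (g' n))"
      and A: "(\<Union>n. dom (g' n)) = case_prod a ` ?S"
      and disj: "disjoint_family (\<lambda>n. dom (g' n))"
      and h: "\<forall>n. dom (h n) = dom (g n) \<and> ran (h n) \<subseteq> case_prod a ` ?S
                  \<and> g n = g' n \<circ>\<^sub>m h n"
    using factor_through_representatives[OF rep inj] by blast
  have "case_prod a ` ?S \<subseteq> XM m"
    using rep assms(2) by (force simp: dom_def)
  moreover have "\<forall>n. dom (h n) \<subseteq> XM m \<and> ran (h n) \<subseteq> case_prod a ` ?S \<and> g n = g' n \<circ>\<^sub>m h n"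
  proof
    fix n
    have "dom (h n) = dom (g n)" using h by blast
    then show "dom (h n) \<subseteq> XM m \<and> ran (h n) \<subseteq> case_prod a ` ?S \<and> g n = g' n \<circ>\<^sub>m h n"
      using h assms(2)[of n] by blast
  qed
  ultimately show ?thesis
    using width g' A[symmetric] disj
    by (intro exI[of _ "case_prod a ` ?S"] exI[of _ g'] exI[of _ h] conjI) blast+
qed

end
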